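(* For every integer $N\ge 0$, let $T_{1\times 4}(6,N)$ be the number of tilings of a $6\times n$ rectangle, $n=2N/3$, by $N$ tiles of size $1\times 4$ (and $0$ if $2N/3\notin\mathbb{Z}$). Then, as formal power series, \[ \sum_{N\ge 0} T_{1\times 4}(6,N)\,z^N=\frac{(1-z^6)^3}{1-7z^6+6z^{12}-4z^{18}+z^{24}}. \]
   Context: A tiling of an $m\times n$ rectangle (width $m$, length $n$, made of $mn$ unit squares) by $a\times b$ tiles is a partition of the rectangle into non-overlapping axis-parallel $a\times b$ rectangles with integer corner coordinates, each placed in either of its two orientations. Tilings related by reflections or rotations of the rectangle are counted as distinct. The empty tiling counts once for $N=0$. *)

theory Defs
  imports Main "HOL-Computational_Algebra.Formal_Power_Series"
begin

text \<open>Cells are unit squares indexed by their lower-left corner (i,j) with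
  i < m (width direction) and j < n (length direction).\<close>

definition rect_cells :: "nat \<Rightarrow> nat \<Rightarrow> nat \<Rightarrow> nat \<Rightarrow> (nat \<times> nat) set" where
  "rect_cells x y w h = {x..<x+w} \<times> {y..<y+h}"

definition is_tile :: "nat \<Rightarrow> nat \<Rightarrow> (nat \<times> nat) set \<Rightarrow> bool" where
  "is_tile a b P \<longleftrightarrow> (\<exists>x y. P = rect_cells x y a b \<or> P = rect_cells x y b a)"

definition is_tiling :: "nat \<Rightarrow> nat \<Rightarrow> nat \<Rightarrow> nat \<Rightarrow> (nat \<times> nat) set set \<Rightarrow> bool" where
  "is_tiling a b m n T \<longleftrightarrow>
     finite T \<and> (\<forall>P\<in>T. is_tile a b P) \<and>
     (\<forall>P\<in>T. \<forall>Q\<in>T. P \<noteq> Q \<longrightarrow> P \<inter> Q = {}) \<and>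
     \<Union>T = {0..<m} \<times> {0..<n}"

definition tiling_count :: "nat \<Rightarrow> nat \<Rightarrow> nat \<Rightarrow> nat \<Rightarrow> nat \<Rightarrow> nat" where
  "tiling_count a b m n N = card {T. is_tiling a b m n T \<and> card T = N}"

definition T_1x4_6 :: "nat \<Rightarrow> nat" where
  "T_1x4_6 N = (if 3 dvd (2 * N) then tiling_count 1 4 6 (2 * N div 3) N else 0)"

end

theory Submission
  imports Defs
begin

text \<open>
  A tiling of the region above a profile (row \<open>i\<close> already filled up to length \<open>h ! i\<close>) can be
  built greedily: the first free cell, in column-then-row order, must be the lower-left corner of
  a tile, so there are at most two choices, and what is left is again the region above a profile.
  Counted this way, the tilings no longer depend on the length of the rectangle once the area is
  fixed. For width 6 and \<open>1 \<times> 4\<close> tiles only 60 profiles occur up to translation along the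
  length. Counting completions with up to 24 tiles from each of them verifies the linear
  recurrence with characteristic polynomial \<open>1 - 7z\<^sup>6 + 6z\<^sup>1\<^sup>2 - 4z\<^sup>1\<^sup>8 + z\<^sup>2\<^sup>4\<close> at every
  profile, and linearity of the transfer system propagates it to all \<open>N\<close>; the initial values
  give the numerator \<open>(1 - z\<^sup>6)\<^sup>3\<close>.
\<close>

unbundle fps_syntax

section \<open>Tilings of finite regions\<close>

definition tilings :: "nat \<Rightarrow> nat \<Rightarrow> (nat \<times> nat) set \<Rightarrow> nat \<Rightarrow> (nat \<times> nat) set set set" where
  "tilings a b R k = {T. finite T \<and> (\<forall>P\<in>T. is_tile a b P) \<and>
     (\<forall>P\<in>T. \<forall>Q\<in>T. P \<noteq> Q \<longrightarrow> P \<inter> Q = {}) \<and> \<Union>T = R \<and> card T = k}"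

lemma tiling_count_eq_card_tilings:
  "tiling_count a b m n k = card (tilings a b ({0..<m} \<times> {0..<n}) k)"
  unfolding tiling_count_def is_tiling_def tilings_def by (simp add: conj_assoc)

lemma finite_tilings: "finite R \<Longrightarrow> finite (tilings a b R k)"
  by (rule finite_subset[of _ "Pow (Pow R)"]) (auto simp: tilings_def)

lemma tilings_0: "tilings a b R 0 = (if R = {} then {{}} else {})"
  by (auto simp: tilings_def)

lemma corner_in_rect_cells: "0 < w \<Longrightarrow> 0 < l \<Longrightarrow> (x, y) \<in> rect_cells x y w l"
  by (simp add: rect_cells_def)

lemma rect_cells_inject:
  assumes "0 < w" "0 < l" "0 < w'" "0 < l'"
  shows "rect_cells x y w l = rect_cells x y w' l' \<longleftrightarrow> w = w' \<and> l = l'"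
  using assms by (auto simp: rect_cells_def times_eq_iff atLeastLessThan_eq_iff)

lemma is_tile_nonempty: "is_tile a b P \<Longrightarrow> 0 < a \<Longrightarrow> 0 < b \<Longrightarrow> P \<noteq> {}"
  unfolding is_tile_def using corner_in_rect_cells by blast

lemma card_tilings_containing:
  assumes ab: "0 < a" "0 < b" and t: "is_tile a b t" "t \<subseteq> R"
  shows "card {T \<in> tilings a b R (Suc k). t \<in> T} = card (tilings a b (R - t) k)"
proof -
  have t_notin: "t \<notin> T'" if "T' \<in> tilings a b (R - t) k" for T'
    using that is_tile_nonempty[OF t(1) ab] by (auto simp: tilings_def)
  have "{T \<in> tilings a b R (Suc k). t \<in> T} = insert t ` tilings a b (R - t) k"
  proof (intro set_eqI iffI)
    fix T assume "T \<in> {T \<in> tilings a b R (Suc k). t \<in> T}"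
    then have T: "finite T" "\<forall>P\<in>T. is_tile a b P" "\<forall>P\<in>T. \<forall>Q\<in>T. P \<noteq> Q \<longrightarrow> P \<inter> Q = {}"
      "\<Union>T = R" "card T = Suc k" "t \<in> T"
      unfolding tilings_def by auto
    then have "\<Union>(T - {t}) = R - t" by blast
    with T have "T - {t} \<in> tilings a b (R - t) k" unfolding tilings_def by auto
    moreover have "T = insert t (T - {t})" using T(6) by blast
    ultimately show "T \<in> insert t ` tilings a b (R - t) k" by blast
  next
    fix T assume "T \<in> insert t ` tilings a b (R - t) k"
    then obtain T' where T': "T = insert t T'" "T' \<in> tilings a b (R - t) k" by blast
    then have T': "T = insert t T'" "finite T'" "\<forall>P\<in>T'. is_tile a b P"
      "\<forall>P\<in>T'. \<forall>Q\<in>T'. P \<noteq> Q \<longrightarrow> P \<inter> Q = {}" "\<Union>T' = R - t" "card T' = k" "t \<notin> T'"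
      using t_notin unfolding tilings_def by auto
    have "\<forall>P\<in>T. \<forall>Q\<in>T. P \<noteq> Q \<longrightarrow> P \<inter> Q = {}" using T'(1,4,5) by blast
    moreover have "\<Union>T = R" using T'(1,5) t(2) by blast
    ultimately show "T \<in> {T \<in> tilings a b R (Suc k). t \<in> T}"
      using T' t(1) unfolding tilings_def by simp
  qed
  moreover have "inj_on (insert t) (tilings a b (R - t) k)"
    using t_notin by (auto intro!: inj_onI simp: insert_ident)
  ultimately show ?thesis by (simp add: card_image)
qed

lemma tile_at_first_cell:
  assumes T: "T \<in> tilings a b R k" and ic: "(i, c) \<in> R"
    and first: "\<And>i' j. (i', j) \<in> R \<Longrightarrow> c < j \<or> (c = j \<and> i \<le> i')"
  shows "\<exists>(w, l)\<in>{(a, b), (b, a)}. rect_cells i c w l \<in> T"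
proof -
  obtain P where P: "P \<in> T" "(i, c) \<in> P" using T ic unfolding tilings_def by auto
  have "P \<subseteq> R" "is_tile a b P" using T P(1) unfolding tilings_def by auto
  then obtain x y w l where wl: "(w, l) \<in> {(a, b), (b, a)}" and Pxy: "P = rect_cells x y w l"
    unfolding is_tile_def by blast
  with P(2) \<open>P \<subseteq> R\<close> have "(x, y) \<in> R" "x \<le> i" "y \<le> c"
    by (auto simp: rect_cells_def)
  with first have "x = i \<and> y = c" by fastforce
  with P(1) Pxy wl show ?thesis by blast
qed

lemma card_tilings_Suc:
  assumes "finite R" "0 < a" "0 < b" and ic: "(i, c) \<in> R"
    and first: "\<And>i' j. (i', j) \<in> R \<Longrightarrow> c < j \<or> (c = j \<and> i \<le> i')"
  shows "card (tilings a b R (Suc k)) =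
    (\<Sum>(w, l)\<in>{(a, b), (b, a)}.
       if rect_cells i c w l \<subseteq> R then card (tilings a b (R - rect_cells i c w l) k) else 0)"
proof -
  define G where "G = (\<lambda>(w, l). {T \<in> tilings a b R (Suc k). rect_cells i c w l \<in> T})"
  have shape_pos: "0 < w \<and> 0 < l" if "(w, l) \<in> {(a, b), (b, a)}" for w l
    using that assms(2,3) by auto
  have cover: "tilings a b R (Suc k) = (\<Union>s\<in>{(a, b), (b, a)}. G s)"
    using tile_at_first_cell[OF _ ic first] by (auto simp: G_def)
  have finite_G: "finite (G s)" for s
    using finite_tilings[OF \<open>finite R\<close>] by (simp add: G_def split: prod.split)
  have disjoint_G: "G s \<inter> G s' = {}" if "s \<in> {(a, b), (b, a)}" "s' \<in> {(a, b), (b, a)}" "s \<noteq> s'"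
    for s s'
  proof -
    obtain w l w' l' where s: "s = (w, l)" "s' = (w', l')" by fastforce
    have "rect_cells i c w l \<noteq> rect_cells i c w' l'"
      using that shape_pos rect_cells_inject s by auto
    moreover have "(i, c) \<in> rect_cells i c w l \<inter> rect_cells i c w' l'"
      using that shape_pos corner_in_rect_cells s by auto
    ultimately show ?thesis unfolding G_def tilings_def s by blast
  qed
  have "card (tilings a b R (Suc k)) = (\<Sum>s\<in>{(a, b), (b, a)}. card (G s))"
    unfolding cover by (rule card_UN_disjoint) (use finite_G disjoint_G in auto)
  also have "\<dots> = (\<Sum>(w, l)\<in>{(a, b), (b, a)}.
       if rect_cells i c w l \<subseteq> R then card (tilings a b (R - rect_cells i c w l) k) else 0)"
  proof (intro sum.cong refl, clarify)
    fix w l assume wl: "(w, l) \<in> {(a, b), (b, a)}"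
    have tile: "is_tile a b (rect_cells i c w l)" using wl unfolding is_tile_def by blast
    show "card (G (w, l)) = (if rect_cells i c w l \<subseteq> R
      then card (tilings a b (R - rect_cells i c w l) k) else 0)"
    proof (cases "rect_cells i c w l \<subseteq> R")
      case True
      then show ?thesis using card_tilings_containing[OF assms(2,3) tile True] by (simp add: G_def)
    next
      case False
      then have "G (w, l) = {}" unfolding G_def tilings_def by blast
      then show ?thesis using False by simp
    qed
  qed
  finally show ?thesis .
qed

section \<open>Profiles\<close>

definition region_above :: "nat list \<Rightarrow> nat \<Rightarrow> (nat \<times> nat) set" where
  "region_above h n = {(i, j). i < length h \<and> h ! i \<le> j \<and> j < n}"

definition index_of :: "'a \<Rightarrow> 'a list \<Rightarrow> nat" where
  "index_of x xs = length (takeWhile (\<lambda>y. y \<noteq> x) xs)"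

lemma index_of_less: "x \<in> set xs \<Longrightarrow> index_of x xs < length xs"
  unfolding index_of_def by (induction xs) auto

lemma nth_index_of: "x \<in> set xs \<Longrightarrow> xs ! index_of x xs = x"
  unfolding index_of_def by (induction xs) auto

lemma nth_neq_before_index_of: "j < index_of x xs \<Longrightarrow> xs ! j \<noteq> x"
  unfolding index_of_def by (metis (mono_tags) nth_mem set_takeWhileD takeWhile_nth)

definition place :: "nat list \<Rightarrow> nat \<Rightarrow> nat \<Rightarrow> nat \<Rightarrow> nat list" where
  "place h i w v = take i h @ replicate w v @ drop (i + w) h"

lemma length_place:
  assumes "take w (drop i h) = replicate w c"
  shows "length (place h i w v) = length h"
proof -
  have "min (length h - i) w = w" using arg_cong[OF assms, of length] by simp
  then show ?thesis by (simp add: place_def min_def split: if_splits; arith)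
qed

lemma nth_place:
  "i + w \<le> length h \<Longrightarrow> k < length h \<Longrightarrow>
    place h i w v ! k = (if i \<le> k \<and> k < i + w then v else h ! k)"
  by (auto simp: place_def nth_append min_def)

lemma take_drop_eq_replicate_iff:
  assumes "0 < w"
  shows "take w (drop i h) = replicate w c \<longleftrightarrow> i + w \<le> length h \<and> (\<forall>k\<in>{i..<i + w}. h ! k = c)"
proof
  assume eq: "take w (drop i h) = replicate w c"
  then have "length (take w (drop i h)) = w" by simp
  then have "i + w \<le> length h" using assms by (simp add: min_def split: if_splits)
  moreover have "h ! k = c" if "k \<in> {i..<i + w}" for k
  proof -
    have "take w (drop i h) ! (k - i) = h ! k"
      using that \<open>i + w \<le> length h\<close> by (auto simp: nth_take nth_drop)
    then show ?thesis using eq that by auto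
  qed
  ultimately show "i + w \<le> length h \<and> (\<forall>k\<in>{i..<i + w}. h ! k = c)" by blast
next
  assume fit: "i + w \<le> length h \<and> (\<forall>k\<in>{i..<i + w}. h ! k = c)"
  have len: "length (take w (drop i h)) = w" using fit by (auto simp: min_def)
  show "take w (drop i h) = replicate w c"
  proof (rule replicate_eqI[OF len])
    fix y assume "y \<in> set (take w (drop i h))"
    then obtain j where j: "j < w" "y = take w (drop i h) ! j" by (metis in_set_conv_nth len)
    then have "y = h ! (i + j)" using fit by simp
    then show "y = c" using fit j(1) by simp
  qed
qed

lemma sum_list_place:
  assumes "take w (drop i h) = replicate w c"
  shows "sum_list (place h i w v) + w * c = sum_list h + w * v"
proof -
  have "h = take i h @ take w (drop i h) @ drop (i + w) h"
    by (metis append_take_drop_id add.commute drop_drop)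
  then have "sum_list h = sum_list (take i h) + w * c + sum_list (drop (i + w) h)"
    using assms by (metis sum_list_append sum_list_replicate of_nat_id add.assoc)
  then show ?thesis by (simp add: place_def sum_list_replicate)
qed

lemma set_place_subset: "set (place h i w v) \<subseteq> insert v (set h)"
  by (auto simp: place_def dest: in_set_takeD in_set_dropD)

lemma rect_cells_subset_region_above:
  assumes "0 < w" "0 < l"
  shows "rect_cells i c w l \<subseteq> region_above h n \<longleftrightarrow>
    i + w \<le> length h \<and> (\<forall>k\<in>{i..<i + w}. h ! k \<le> c) \<and> c + l \<le> n"
proof
  assume sub: "rect_cells i c w l \<subseteq> region_above h n"
  have cell: "k < length h \<and> h ! k \<le> j \<and> j < n" if "i \<le> k" "k < i + w" "c \<le> j" "j < c + l" for k j
    using subsetD[OF sub, of "(k, j)"] that by (auto simp: rect_cells_def region_above_def)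
  have "i + w \<le> length h" using cell[of "i + w - 1" c] assms by fastforce
  moreover have "c + l \<le> n" using cell[of i "c + l - 1"] assms by fastforce
  ultimately show "i + w \<le> length h \<and> (\<forall>k\<in>{i..<i + w}. h ! k \<le> c) \<and> c + l \<le> n"
    using cell[of _ c] assms by auto
qed (auto simp: rect_cells_def region_above_def)

lemma region_above_diff_rect_cells:
  assumes "take w (drop i h) = replicate w c" "0 < w"
  shows "region_above h n - rect_cells i c w l = region_above (place h i w (c + l)) n"
  using assms length_place[OF assms(1)]
  by (auto simp: region_above_def rect_cells_def take_drop_eq_replicate_iff nth_place split: if_splits)

lemma min_list_le: "x \<in> set (h :: 'a::linorder list) \<Longrightarrow> min_list h \<le> x"
  using min_list_Min[of h] Min_le[of "set h" x] by fastforce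

lemma min_list_in_set: "(h :: 'a::linorder list) \<noteq> [] \<Longrightarrow> min_list h \<in> set h"
  using min_list_Min[of h] by simp

definition lowest_row :: "nat list \<Rightarrow> nat" where
  "lowest_row h = index_of (min_list h) h"

lemma lowest_row_less: "h \<noteq> [] \<Longrightarrow> lowest_row h < length h"
  unfolding lowest_row_def by (simp add: index_of_less min_list_in_set)

lemma nth_lowest_row: "h \<noteq> [] \<Longrightarrow> h ! lowest_row h = min_list h"
  unfolding lowest_row_def by (simp add: nth_index_of min_list_in_set)

lemma first_cell_in_region_above:
  "h \<noteq> [] \<Longrightarrow> min_list h < n \<Longrightarrow> (lowest_row h, min_list h) \<in> region_above h n"
  by (simp add: region_above_def lowest_row_less nth_lowest_row)

lemma first_cell_of_region_above:
  assumes "(i, j) \<in> region_above h n"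
  shows "min_list h < j \<or> (min_list h = j \<and> lowest_row h \<le> i)"
proof -
  have i: "i < length h" "h ! i \<le> j" using assms by (auto simp: region_above_def)
  then have "min_list h \<le> h ! i" by (simp add: min_list_le)
  moreover have "lowest_row h \<le> i" if "h ! i = min_list h"
    using that nth_neq_before_index_of[of i "min_list h" h] unfolding lowest_row_def by fastforce
  ultimately show ?thesis using i(2) by fastforce
qed

lemma rect_cells_at_first_cell_subset_iff:
  assumes "0 < w" "0 < l"
  shows "rect_cells (lowest_row h) (min_list h) w l \<subseteq> region_above h n \<longleftrightarrow>
    take w (drop (lowest_row h) h) = replicate w (min_list h) \<and> min_list h + l \<le> n"
proof -
  have "min_list h \<le> h ! k" if "k < length h" for k using that by (simp add: min_list_le)
  then have "(\<forall>k\<in>{lowest_row h..<lowest_row h + w}. h ! k \<le> min_list h) \<longleftrightarrow>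
      (\<forall>k\<in>{lowest_row h..<lowest_row h + w}. h ! k = min_list h)" if "lowest_row h + w \<le> length h"
    using that by (auto intro: le_antisym)
  then show ?thesis
    unfolding rect_cells_subset_region_above[OF assms] take_drop_eq_replicate_iff[OF assms(1)] by blast
qed

section \<open>Flat completions of a profile\<close>

lemma sum_list_eq_length_mult_iff:
  fixes xs :: "nat list"
  assumes "\<forall>x\<in>set xs. x \<le> n"
  shows "sum_list xs = length xs * n \<longleftrightarrow> (\<forall>x\<in>set xs. x = n)"
  using assms
proof (induction xs)
  case (Cons x xs)
  have "sum_list xs \<le> length xs * n"
    using Cons.prems sum_list_mono[of xs id "\<lambda>_. n"] by (simp add: sum_list_triv)
  then show ?case using Cons by auto
qed simp

text \<open>\<open>remdups\<close> keeps a square tile from being placed twice in the same way.\<close>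

definition moves :: "nat \<Rightarrow> nat \<Rightarrow> nat list \<Rightarrow> nat list list" where
  "moves a b h = map (\<lambda>(w, l). place h (lowest_row h) w (min_list h + l))
     (filter (\<lambda>(w, l). take w (drop (lowest_row h) h) = replicate w (min_list h))
       (remdups [(a, b), (b, a)]))"

fun flat_completions :: "nat \<Rightarrow> nat \<Rightarrow> nat \<Rightarrow> nat list \<Rightarrow> nat" where
  "flat_completions a b 0 h = (if \<forall>x\<in>set h. x = min_list h then 1 else 0)"
| "flat_completions a b (Suc k) h = (\<Sum>g\<leftarrow>moves a b h. flat_completions a b k g)"

lemma sum_list_moves:
  "(\<Sum>g\<leftarrow>moves a b h. f g) = (\<Sum>(w, l)\<in>{(a, b), (b, a)}.
     if take w (drop (lowest_row h) h) = replicate w (min_list h)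
     then f (place h (lowest_row h) w (min_list h + l)) else 0)"
proof -
  have shapes: "{(a, b), (b, a)} = set [(a, b), (b, a)]" by simp
  show ?thesis
    unfolding moves_def map_map sum_list_map_filter' shapes sum.set_conv_list
    by (simp only: comp_def case_prod_unfold if_distrib)
qed

lemma set_moves:
  "g \<in> set (moves a b h) \<longleftrightarrow> (\<exists>(w, l)\<in>{(a, b), (b, a)}.
     take w (drop (lowest_row h) h) = replicate w (min_list h) \<and>
     g = place h (lowest_row h) w (min_list h + l))"
  unfolding moves_def set_map set_filter set_remdups image_iff Bex_def by auto

lemma moves_raise:
  assumes "g \<in> set (moves a b h)" "h \<noteq> []"
  shows "length g = length h" "\<forall>j<length h. h ! j \<le> g ! j" "sum_list g = sum_list h + a * b"
proof -
  obtain w l where wl: "(w, l) \<in> {(a, b), (b, a)}"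
    and fit: "take w (drop (lowest_row h) h) = replicate w (min_list h)"
    and g: "g = place h (lowest_row h) w (min_list h + l)"
    using assms(1) unfolding set_moves by blast
  show "length g = length h" using g length_place[OF fit] by simp
  have "lowest_row h + w \<le> length h"
    using arg_cong[OF fit, of length] lowest_row_less[OF assms(2)] by (auto simp: min_def split: if_splits)
  have "h ! j \<le> g ! j" if j: "j < length h" for j
  proof (cases "lowest_row h \<le> j \<and> j < lowest_row h + w")
    case True
    then have "0 < w" by simp
    have "\<forall>k\<in>{lowest_row h..<lowest_row h + w}. h ! k = min_list h"
      using fit unfolding take_drop_eq_replicate_iff[OF \<open>0 < w\<close>] by (rule conjunct2)
    then have "h ! j = min_list h" using True by simp
    then show ?thesis using True j \<open>lowest_row h + w \<le> length h\<close> by (simp add: g nth_place)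
  next
    case False
    then show ?thesis using j \<open>lowest_row h + w \<le> length h\<close> by (auto simp: g nth_place)
  qed
  then show "\<forall>j<length h. h ! j \<le> g ! j" by blast
  have "sum_list g + w * min_list h = sum_list h + w * (min_list h + l)"
    using sum_list_place[OF fit] g by simp
  moreover have "w * l = a * b" using wl by auto
  ultimately show "sum_list g = sum_list h + a * b" by (simp add: distrib_left)
qed

lemma min_list_map_minus:
  "h \<noteq> [] \<Longrightarrow> min_list (map (\<lambda>x. x - d) h) = min_list h - (d :: nat)"
  using mono_Min_commute[of "\<lambda>x. x - d" "set h"] by (simp add: min_list_Min mono_def diff_le_mono)

lemma lowest_row_map_minus:
  assumes "\<forall>x\<in>set h. d \<le> x" "h \<noteq> []"
  shows "lowest_row (map (\<lambda>x. x - d) h) = lowest_row (h :: nat list)"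
proof -
  have "d \<le> min_list h" using assms min_list_in_set by blast
  then have "takeWhile (\<lambda>y. y \<noteq> min_list h - d) (map (\<lambda>x. x - d) h) =
      map (\<lambda>x. x - d) (takeWhile (\<lambda>y. y \<noteq> min_list h) h)"
    unfolding takeWhile_map using assms(1) by (intro arg_cong[where f = "map _"] takeWhile_cong) auto
  then show ?thesis unfolding lowest_row_def index_of_def min_list_map_minus[OF assms(2)] by simp
qed

lemma moves_map_minus:
  assumes "\<forall>x\<in>set h. d \<le> x" "h \<noteq> []"
  shows "moves a b (map (\<lambda>x. x - d) h) = map (map (\<lambda>x. x - d)) (moves a b h)"
proof -
  let ?f = "\<lambda>x::nat. x - d" and ?i = "lowest_row h" and ?c = "min_list h"
  have c: "d \<le> ?c" using assms min_list_in_set by blast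
  have fit: "take w (drop ?i (map ?f h)) = replicate w (?c - d) \<longleftrightarrow>
      take w (drop ?i h) = replicate w ?c" for w
  proof -
    have "inj_on ?f (set (take w (drop ?i h)) \<union> set (replicate w ?c))"
      using assms(1) c by (intro inj_on_diff_nat) (auto dest: in_set_takeD in_set_dropD)
    then have "map ?f (take w (drop ?i h)) = map ?f (replicate w ?c) \<longleftrightarrow>
        take w (drop ?i h) = replicate w ?c"
      by (rule inj_on_map_eq_map)
    then show ?thesis by (simp add: take_map drop_map)
  qed
  have place: "place (map ?f h) ?i w (?c - d + l) = map ?f (place h ?i w (?c + l))" for w l
    using c by (simp add: place_def take_map drop_map)
  have filter: "filter (\<lambda>(w, l). take w (drop ?i (map ?f h)) = replicate w (?c - d)) xs =
      filter (\<lambda>(w, l). take w (drop ?i h) = replicate w ?c) xs" for xs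
    by (rule filter_cong) (simp_all only: fit case_prod_unfold)
  show ?thesis
    unfolding moves_def min_list_map_minus[OF assms(2)] lowest_row_map_minus[OF assms] map_map filter
    by (simp only: comp_def case_prod_unfold place)
qed

lemma flat_completions_map_minus:
  assumes "\<forall>x\<in>set h. d \<le> x" "h \<noteq> []"
  shows "flat_completions a b k (map (\<lambda>x. x - d) h) = flat_completions a b k h"
  using assms
proof (induction k arbitrary: h)
  case 0
  then have "d \<le> min_list h" using min_list_in_set by blast
  with 0 have "\<forall>x\<in>set h. x - d = min_list h - d \<longleftrightarrow> x = min_list h"
    using eq_diff_iff by blast
  then show ?case using 0 by (simp add: min_list_map_minus)
next
  case (Suc k)
  have step: "flat_completions a b k (map (\<lambda>x. x - d) g) = flat_completions a b k g"
    if g: "g \<in> set (moves a b h)" for g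
  proof (rule Suc.IH)
    have len: "length g = length h" and le: "\<forall>j<length h. h ! j \<le> g ! j"
      using moves_raise[OF g Suc.prems(2)] by auto
    show "g \<noteq> []" using len Suc.prems(2) by auto
    show "\<forall>x\<in>set g. d \<le> x"
    proof
      fix x assume "x \<in> set g"
      then obtain j where j: "j < length h" "x = g ! j" using len by (auto simp: in_set_conv_nth)
      then have "d \<le> h ! j" using Suc.prems(1) by simp
      then show "d \<le> x" using le j by fastforce
    qed
  qed
  have "flat_completions a b (Suc k) (map (\<lambda>x. x - d) h) =
      (\<Sum>g\<leftarrow>moves a b h. flat_completions a b k (map (\<lambda>x. x - d) g))"
    using moves_map_minus[OF Suc.prems] by (simp add: comp_def)
  also have "\<dots> = flat_completions a b (Suc k) h"
    using step by (simp cong: map_cong)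
  finally show ?case .
qed

definition normalize_profile :: "nat list \<Rightarrow> nat list" where
  "normalize_profile h = map (\<lambda>x. x - min_list h) h"

lemma flat_completions_normalize_profile:
  "flat_completions a b k (normalize_profile h) = flat_completions a b k h"
proof (cases "h = []")
  case False
  then show ?thesis
    unfolding normalize_profile_def by (intro flat_completions_map_minus) (auto simp: min_list_le)
qed (simp add: normalize_profile_def)

lemma flat_completions_Suc_normalized:
  "flat_completions a b (Suc k) h =
    (\<Sum>g\<leftarrow>map normalize_profile (moves a b h). flat_completions a b k g)"
  by (simp add: comp_def flat_completions_normalize_profile)

lemma flat_completions_area:
  assumes "flat_completions a b k h \<noteq> 0" "h \<noteq> []"
  shows "\<exists>C. (\<forall>x\<in>set h. x \<le> C) \<and> sum_list h + a * b * k = length h * C"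
  using assms
proof (induction k arbitrary: h)
  case 0
  then have "\<forall>x\<in>set h. x = min_list h" by (simp split: if_splits)
  then show ?case using sum_list_eq_length_mult_iff[of h "min_list h"] by auto
next
  case (Suc k)
  then obtain g where g: "g \<in> set (moves a b h)" "flat_completions a b k g \<noteq> 0" by auto
  note raise = moves_raise[OF g(1) Suc.prems(2)]
  have "g \<noteq> []" using raise(1) Suc.prems(2) by auto
  then obtain C where C: "\<forall>x\<in>set g. x \<le> C" "sum_list g + a * b * k = length g * C"
    using Suc.IH[OF g(2)] by blast
  have "\<forall>x\<in>set h. x \<le> C"
  proof
    fix x assume "x \<in> set h"
    then obtain j where j: "j < length h" "x = h ! j" by (auto simp: in_set_conv_nth)
    then have "g ! j \<in> set g" using raise(1) by simp
    then show "x \<le> C" using C(1) raise(2) j by fastforce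
  qed
  moreover have "sum_list h + a * b * Suc k = length h * C" using C(2) raise by simp
  ultimately show ?case by blast
qed

lemma flat_completions_eq_0_if_above:
  assumes "g \<noteq> []" "sum_list g + a * b * k = length g * n" "x \<in> set g" "n < x"
  shows "flat_completions a b k g = 0"
proof (rule ccontr)
  assume "flat_completions a b k g \<noteq> 0"
  then obtain C where "\<forall>x\<in>set g. x \<le> C" "sum_list g + a * b * k = length g * C"
    using flat_completions_area assms(1) by blast
  then show False using assms by auto
qed

lemma card_tilings_after_first_tile:
  fixes h :: "nat list"
  defines "i \<equiv> lowest_row h" and "c \<equiv> min_list h"
  assumes "0 < w" "0 < l" "w * l = a * b" "h \<noteq> []"
    and bound: "\<forall>x\<in>set h. x \<le> n" and area: "sum_list h + a * b * Suc k = length h * n"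
    and count: "\<And>g. g \<noteq> [] \<Longrightarrow> \<forall>x\<in>set g. x \<le> n \<Longrightarrow> sum_list g + a * b * k = length g * n \<Longrightarrow>
      card (tilings a b (region_above g n) k) = flat_completions a b k g"
  shows "(if rect_cells i c w l \<subseteq> region_above h n
      then card (tilings a b (region_above h n - rect_cells i c w l) k) else 0) =
    (if take w (drop i h) = replicate w c then flat_completions a b k (place h i w (c + l)) else 0)"
proof (cases "take w (drop i h) = replicate w c")
  case fit: True
  let ?g = "place h i w (c + l)"
  have len: "length ?g = length h" using length_place[OF fit] .
  have sum: "sum_list ?g + a * b * k = length ?g * n"
    using sum_list_place[OF fit, of "c + l"] area len \<open>w * l = a * b\<close> by (simp add: algebra_simps)
  show ?thesis
  proof (cases "c + l \<le> n")
    case True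
    have "\<forall>x\<in>set ?g. x \<le> n" using set_place_subset bound True by blast
    with len sum \<open>h \<noteq> []\<close> have "card (tilings a b (region_above ?g n) k) = flat_completions a b k ?g"
      by (intro count) auto
    then show ?thesis
      using fit True region_above_diff_rect_cells[OF fit \<open>0 < w\<close>]
      by (simp add: rect_cells_at_first_cell_subset_iff[OF \<open>0 < w\<close> \<open>0 < l\<close>] i_def c_def)
  next
    case False
    txt \<open>A tile reaching beyond \<open>n\<close> cannot be completed: the area forces the final height \<open>n\<close>.\<close>
    have "?g \<noteq> []" using len \<open>h \<noteq> []\<close> by auto
    moreover have "c + l \<in> set ?g" using \<open>0 < w\<close> by (simp add: place_def)
    ultimately have "flat_completions a b k ?g = 0"
      using flat_completions_eq_0_if_above[OF _ sum] False by simp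
    then show ?thesis
      using fit False by (simp add: rect_cells_at_first_cell_subset_iff[OF \<open>0 < w\<close> \<open>0 < l\<close>] i_def c_def)
  qed
next
  case False
  then show ?thesis by (simp add: rect_cells_at_first_cell_subset_iff[OF \<open>0 < w\<close> \<open>0 < l\<close>] i_def c_def)
qed

lemma card_tilings_region_above:
  assumes "0 < a" "0 < b"
  shows "h \<noteq> [] \<Longrightarrow> \<forall>x\<in>set h. x \<le> n \<Longrightarrow> sum_list h + a * b * k = length h * n \<Longrightarrow>
    card (tilings a b (region_above h n) k) = flat_completions a b k h"
proof (induction k arbitrary: h)
  case 0
  then have all: "\<forall>x\<in>set h. x = n" using sum_list_eq_length_mult_iff by simp
  then have "\<forall>x\<in>set h. x = min_list h" using min_list_in_set[OF 0(1)] by metis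
  moreover have "region_above h n = {}"
    unfolding region_above_def using all nth_mem by fastforce
  ultimately show ?case by (simp add: tilings_0)
next
  case (Suc k)
  let ?c = "min_list h" and ?i = "lowest_row h"
  have "?c < n"
  proof (rule ccontr)
    assume "\<not> ?c < n"
    then have "\<forall>x\<in>set h. x = n" using Suc.prems(2) min_list_le by fastforce
    then have "sum_list h = length h * n" using sum_list_eq_length_mult_iff[of h n] by auto
    then show False using Suc.prems(3) assms by simp
  qed
  have "finite (region_above h n)"
    by (rule finite_subset[of _ "{..<length h} \<times> {..<n}"]) (auto simp: region_above_def)
  then have "card (tilings a b (region_above h n) (Suc k)) =
    (\<Sum>(w, l)\<in>{(a, b), (b, a)}. if rect_cells ?i ?c w l \<subseteq> region_above h n
       then card (tilings a b (region_above h n - rect_cells ?i ?c w l) k) else 0)"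
    using assms first_cell_in_region_above[OF Suc.prems(1) \<open>?c < n\<close>]
    by (intro card_tilings_Suc) (auto dest: first_cell_of_region_above)
  also have "\<dots> = (\<Sum>(w, l)\<in>{(a, b), (b, a)}.
     if take w (drop ?i h) = replicate w ?c then flat_completions a b k (place h ?i w (?c + l)) else 0)"
    using assms Suc by (intro sum.cong refl, clarify, intro card_tilings_after_first_tile) auto
  also have "\<dots> = flat_completions a b (Suc k) h" by (simp add: sum_list_moves)
  finally show ?case .
qed

section \<open>Linear recurrences along a transfer system\<close>

definition closed_under :: "('s \<Rightarrow> 's list) \<Rightarrow> 's list \<Rightarrow> bool" where
  "closed_under succ S \<longleftrightarrow> (\<forall>s\<in>set S. set (succ s) \<subseteq> set S)"

text \<open>Successors are replaced by their positions in \<open>S\<close>, which makes the transfer step cheap to evaluate.\<close>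

definition transfer_indices :: "('s \<Rightarrow> 's list) \<Rightarrow> 's list \<Rightarrow> nat list list" where
  "transfer_indices succ S = map (\<lambda>s. map (\<lambda>t. index_of t S) (succ s)) S"

definition transfer_step :: "nat list list \<Rightarrow> 'a::monoid_add list \<Rightarrow> 'a list" where
  "transfer_step I v = map (\<lambda>is. \<Sum>j\<leftarrow>is. v ! j) I"

lemma transfer_step_iterate:
  fixes F :: "nat \<Rightarrow> 's \<Rightarrow> 'a::monoid_add"
  assumes step: "\<And>k s. F (Suc k) s = (\<Sum>t\<leftarrow>succ s. F k t)"
    and closed: "closed_under succ S"
  shows "i < length S \<Longrightarrow>
    (transfer_step (transfer_indices succ S) ^^ k) (map (F 0) S) ! i = F k (S ! i)"
proof (induction k arbitrary: i)
  case (Suc k)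
  let ?v = "(transfer_step (transfer_indices succ S) ^^ k) (map (F 0) S)"
  have succ: "index_of t S < length S" "S ! index_of t S = t" if "t \<in> set (succ (S ! i))" for t
  proof -
    have "t \<in> set S" using that closed Suc.prems nth_mem unfolding closed_under_def by blast
    then show "index_of t S < length S" "S ! index_of t S = t" by (simp_all add: index_of_less nth_index_of)
  qed
  have "(transfer_step (transfer_indices succ S) ^^ Suc k) (map (F 0) S) ! i =
      (\<Sum>t\<leftarrow>succ (S ! i). ?v ! index_of t S)"
    using Suc.prems by (simp add: transfer_step_def transfer_indices_def comp_def)
  also have "\<dots> = (\<Sum>t\<leftarrow>succ (S ! i). F k t)"
    using Suc.IH succ by (simp cong: map_cong)
  also have "\<dots> = F (Suc k) (S ! i)" using step by simp
  finally show ?case .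
qed simp

fun iterates :: "('a \<Rightarrow> 'a) \<Rightarrow> 'a \<Rightarrow> nat \<Rightarrow> 'a list" where
  "iterates f x 0 = [x]"
| "iterates f x (Suc n) = (let xs = iterates f x n in xs @ [f (last xs)])"

lemma iterates_eq_map_funpow: "iterates f x n = map (\<lambda>k. (f ^^ k) x) [0..<Suc n]"
  by (induction n) (simp_all add: Let_def)

lemma nth_iterates: "k \<le> n \<Longrightarrow> iterates f x n ! k = (f ^^ k) x"
  by (simp add: iterates_eq_map_funpow del: upt_Suc)

lemma sum_sum_list_swap:
  "(\<Sum>j\<in>A. c j * (\<Sum>t\<leftarrow>ts. f j t)) = (\<Sum>t\<leftarrow>ts. \<Sum>j\<in>A. c j * f j t :: 'a::comm_semiring_0)"
  by (induction ts) (simp_all add: sum.distrib distrib_left)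

lemma linear_recurrence_propagates:
  fixes F :: "nat \<Rightarrow> 's \<Rightarrow> 'a::comm_semiring_0"
  assumes step: "\<And>k s. F (Suc k) s = (\<Sum>t\<leftarrow>succ s. F k t)"
    and closed: "closed_under succ S"
    and base: "\<forall>s\<in>set S. (\<Sum>j\<le>d. c j * F (d - j) s) = 0"
  shows "d \<le> k \<Longrightarrow> \<forall>s\<in>set S. (\<Sum>j\<le>d. c j * F (k - j) s) = 0"
proof (induction k rule: dec_induct)
  case (step m)
  show ?case
  proof
    fix s assume s: "s \<in> set S"
    have "(\<Sum>j\<le>d. c j * F (Suc m - j) s) = (\<Sum>j\<le>d. c j * (\<Sum>t\<leftarrow>succ s. F (m - j) t))"
      using step.hyps s by (intro sum.cong refl) (simp add: Suc_diff_le assms(1))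
    also have "\<dots> = (\<Sum>t\<leftarrow>succ s. \<Sum>j\<le>d. c j * F (m - j) t)" by (rule sum_sum_list_swap)
    also have "\<dots> = 0" using step.IH s closed by (simp add: closed_under_def subset_iff cong: map_cong)
    finally show "(\<Sum>j\<le>d. c j * F (Suc m - j) s) = 0" .
  qed
qed (use base in simp)

lemma fps_eq_divide_of_convolution:
  fixes D P :: "'a::field fps"
  assumes "D $ 0 \<noteq> 0" and "\<And>N. (\<Sum>j\<le>N. D $ j * a (N - j)) = P $ N"
  shows "Abs_fps a = P / D"
proof -
  have "D * Abs_fps a = P"
    by (rule fps_ext) (simp add: fps_mult_nth atLeast0AtMost assms(2))
  moreover have "D \<noteq> 0" using assms(1) by auto
  ultimately show ?thesis by auto
qed

section \<open>Width 6 and tiles 1 \<times> 4\<close>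

lemma T_1x4_6_eq_flat_completions: "T_1x4_6 N = flat_completions 1 4 N (replicate 6 0)"
proof (cases "3 dvd 2 * N")
  case True
  define n where "n = 2 * N div 3"
  have "region_above (replicate 6 0) n = {0..<6} \<times> {0..<n}" by (auto simp: region_above_def)
  moreover have "sum_list (replicate 6 0) + 1 * 4 * N = length (replicate 6 (0::nat)) * n"
    using True by (auto simp: n_def sum_list_replicate elim!: dvdE)
  ultimately show ?thesis
    using card_tilings_region_above[of 1 4 "replicate 6 0" n N] True
    by (simp add: T_1x4_6_def tiling_count_eq_card_tilings n_def)
next
  case False
  have "flat_completions 1 4 N (replicate 6 0) = 0"
  proof (rule ccontr)
    assume "flat_completions 1 4 N (replicate 6 0) \<noteq> 0"
    then obtain C where "sum_list (replicate 6 0) + 1 * 4 * N = length (replicate 6 (0::nat)) * C"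
      using flat_completions_area by fastforce
    then show False using False by (simp add: sum_list_replicate)
  qed
  then show ?thesis using False by (simp add: T_1x4_6_def)
qed

definition normalized_moves_1x4 :: "nat list \<Rightarrow> nat list list" where
  "normalized_moves_1x4 h = map normalize_profile (moves 1 4 h)"

lemma flat_completions_1x4_Suc:
  "flat_completions 1 4 (Suc k) s = (\<Sum>t\<leftarrow>normalized_moves_1x4 s. flat_completions 1 4 k t)"
  unfolding normalized_moves_1x4_def by (rule flat_completions_Suc_normalized)

text \<open>The normalized profiles reachable from the flat one, found by search; closure is checked below.\<close>

definition profiles_6 :: "nat list list" where
  "profiles_6 =
    [[0,0,0,0,0,0], [0,0,0,0,1,1], [0,0,0,0,2,2], [0,0,0,0,3,3], [0,0,1,1,1,1], [0,0,2,2,2,2],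
     [0,0,3,3,3,3], [0,1,1,1,1,0], [0,2,2,2,2,0], [0,3,3,3,3,0], [1,0,0,0,0,1], [1,1,0,0,0,0],
     [1,1,1,1,0,0], [1,1,1,1,4,0], [1,1,4,0,0,0], [1,1,4,4,0,0], [1,1,4,4,4,0], [1,4,0,0,0,1],
     [1,4,4,0,0,1], [1,4,4,4,0,1], [2,0,0,0,0,2], [2,2,0,0,0,0], [2,2,2,2,0,0], [2,2,2,2,4,0],
     [2,2,4,0,0,0], [2,2,4,4,0,0], [2,2,4,4,4,0], [2,4,0,0,0,2], [2,4,4,0,0,2], [2,4,4,4,0,2],
     [3,0,0,0,0,3], [3,3,0,0,0,0], [3,3,3,3,0,0], [3,3,3,3,4,0], [3,3,4,0,0,0], [3,3,4,4,0,0],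
     [3,3,4,4,4,0], [3,4,0,0,0,3], [3,4,4,0,0,3], [3,4,4,4,0,3], [4,0,0,0,0,0], [4,0,0,0,1,1],
     [4,0,0,0,2,2], [4,0,0,0,3,3], [4,0,1,1,1,1], [4,0,2,2,2,2], [4,0,3,3,3,3], [4,1,1,1,1,0],
     [4,2,2,2,2,0], [4,3,3,3,3,0], [4,4,0,0,0,0], [4,4,0,0,1,1], [4,4,0,0,2,2], [4,4,0,0,3,3],
     [4,4,4,0,0,0], [4,4,4,0,1,1], [4,4,4,0,2,2], [4,4,4,0,3,3], [4,4,4,4,0,0], [4,4,4,4,4,0]]"

lemma closed_profiles_6: "closed_under normalized_moves_1x4 profiles_6"
  by code_simp

definition count_table :: "nat list list" where
  "count_table = iterates (transfer_step (transfer_indices normalized_moves_1x4 profiles_6))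
     (map (flat_completions 1 4 0) profiles_6) 24"

lemma nth_count_table:
  assumes "k \<le> 24" "i < length profiles_6"
  shows "count_table ! k ! i = flat_completions 1 4 k (profiles_6 ! i)"
  unfolding count_table_def nth_iterates[OF assms(1)]
  by (rule transfer_step_iterate[where F = "flat_completions 1 4",
        OF flat_completions_1x4_Suc closed_profiles_6 assms(2)])

definition denominator_coeff :: "nat \<Rightarrow> int" where
  "denominator_coeff j = (if j = 0 then 1 else if j = 6 then -7 else if j = 12 then 6
     else if j = 18 then -4 else if j = 24 then 1 else 0)"

definition numerator_coeff :: "nat \<Rightarrow> int" where
  "numerator_coeff j = (if j = 0 then 1 else if j = 6 then -3 else if j = 12 then 3
     else if j = 18 then -1 else 0)"

definition recurrence_table_ok :: "nat list list \<Rightarrow> bool" where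
  "recurrence_table_ok vs \<longleftrightarrow>
     (\<forall>i<length profiles_6. (\<Sum>j\<le>24. denominator_coeff j * int (vs ! (24 - j) ! i)) = 0) \<and>
     (\<forall>N\<le>24. (\<Sum>j\<le>N. denominator_coeff j * int (vs ! (N - j) ! 0)) = numerator_coeff N)"

lemma recurrence_table_ok_count_table: "recurrence_table_ok count_table"
  by code_simp

lemma count_table_recurrence:
  "\<forall>s\<in>set profiles_6. (\<Sum>j\<le>24. denominator_coeff j * int (flat_completions 1 4 (24 - j) s)) = 0"
  "N \<le> 24 \<Longrightarrow>
    (\<Sum>j\<le>N. denominator_coeff j * int (flat_completions 1 4 (N - j) (replicate 6 0))) =
    numerator_coeff N"
proof -
  note ok = recurrence_table_ok_count_table[unfolded recurrence_table_ok_def]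
  show "\<forall>s\<in>set profiles_6.
      (\<Sum>j\<le>24. denominator_coeff j * int (flat_completions 1 4 (24 - j) s)) = 0"
  proof
    fix s assume "s \<in> set profiles_6"
    then obtain i where i: "i < length profiles_6" "s = profiles_6 ! i" by (metis in_set_conv_nth)
    then have "(\<Sum>j\<le>24. denominator_coeff j * int (count_table ! (24 - j) ! i)) = 0"
      using ok by blast
    then show "(\<Sum>j\<le>24. denominator_coeff j * int (flat_completions 1 4 (24 - j) s)) = 0"
      using i by (simp add: nth_count_table)
  qed
  assume N: "N \<le> 24"
  have zero: "profiles_6 ! 0 = replicate 6 0" "0 < length profiles_6"
    by (simp_all add: profiles_6_def numeral_eq_Suc)
  have "(\<Sum>j\<le>N. denominator_coeff j * int (count_table ! (N - j) ! 0)) = numerator_coeff N"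
    using ok N by blast
  then show "(\<Sum>j\<le>N. denominator_coeff j * int (flat_completions 1 4 (N - j) (replicate 6 0))) =
      numerator_coeff N"
    using N zero by (simp add: nth_count_table)
qed

lemma flat_completions_recurrence:
  "(\<Sum>j\<le>N. denominator_coeff j * int (flat_completions 1 4 (N - j) (replicate 6 0))) =
    numerator_coeff N"
proof (cases "N \<le> 24")
  case False
  let ?F = "\<lambda>k s. int (flat_completions 1 4 k s)"
  have step: "?F (Suc k) s = (\<Sum>t\<leftarrow>normalized_moves_1x4 s. ?F k t)" for k s
    unfolding flat_completions_1x4_Suc sum_list_of_nat[symmetric] map_map comp_def ..
  have "\<forall>s\<in>set profiles_6. (\<Sum>j\<le>24. denominator_coeff j * ?F (N - j) s) = 0"
    using linear_recurrence_propagates[OF step closed_profiles_6 count_table_recurrence(1)] False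
    by simp
  moreover have "replicate 6 0 \<in> set profiles_6" by (simp add: profiles_6_def numeral_eq_Suc)
  moreover have "(\<Sum>j\<le>N. denominator_coeff j * ?F (N - j) (replicate 6 0)) =
      (\<Sum>j\<le>24. denominator_coeff j * ?F (N - j) (replicate 6 0))"
    using False by (intro sum.mono_neutral_right) (auto simp: denominator_coeff_def)
  ultimately show ?thesis using False by (simp add: numerator_coeff_def)
qed (rule count_table_recurrence(2))

lemma denominator_nth:
  "(1 - 7 * fps_X ^ 6 + 6 * fps_X ^ 12 - 4 * fps_X ^ 18 + fps_X ^ 24 :: 'a::comm_ring_1 fps) $ j =
    of_int (denominator_coeff j)"
  by (simp add: denominator_coeff_def fps_numeral_fps_const fps_X_power_nth)

lemma numerator_nth:
  "((1 - fps_X ^ 6) ^ 3 :: 'a::comm_ring_1 fps) $ j = of_int (numerator_coeff j)"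
proof -
  have "(1 - fps_X ^ 6) ^ 3 = (1 - 3 * fps_X ^ 6 + 3 * fps_X ^ 12 - fps_X ^ 18 :: 'a fps)"
    by (simp add: power3_eq_cube algebra_simps flip: power_add)
  then show ?thesis by (simp add: numerator_coeff_def fps_numeral_fps_const fps_X_power_nth)
qed

theorem mainTheorem5:
  shows "(Abs_fps (\<lambda>N. of_nat (T_1x4_6 N)) :: rat fps) =
    (1 - fps_X ^ 6) ^ 3 /
    (1 - 7 * fps_X ^ 6 + 6 * fps_X ^ 12 - 4 * fps_X ^ 18 + fps_X ^ 24)"
proof (rule fps_eq_divide_of_convolution)
  fix N
  show "(\<Sum>j\<le>N. (1 - 7 * fps_X ^ 6 + 6 * fps_X ^ 12 - 4 * fps_X ^ 18 + fps_X ^ 24 :: rat fps) $ j *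
      of_nat (T_1x4_6 (N - j))) = (1 - fps_X ^ 6) ^ 3 $ N"
    unfolding denominator_nth numerator_nth T_1x4_6_eq_flat_completions
    using arg_cong[OF flat_completions_recurrence[of N], of "of_int :: int \<Rightarrow> rat"] by simp
qed (simp add: denominator_nth denominator_coeff_def)

end
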